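(* Let $q=2^h$. In ${\rm PG}(4,q)$ with homogeneous coordinates $(X_1,\dots,X_5)$ let $\ell$ be the line $X_1=X_4=X_5=0$, $\Sigma$ the solid $X_1=0$, and $\mathcal H$ the hyperbolic quadric of $\Sigma$ with equation $X_2X_5+X_3X_4=0$. Let $\mathcal W(3,q)$ be the symplectic polar space of $\Sigma$ whose lines are the lines of $\Sigma$ totally isotropic for $B(x,y)=x_2y_5+x_5y_2+x_3y_4+x_4y_3$, and let $\mathcal T$ be the set of lines of $\mathcal W(3,q)$ having exactly one point in common with $\mathcal H\setminus\ell$. Let $\alpha\in{\rm GF}(q)$ be such that $X^2+X+\alpha$ is irreducible over ${\rm GF}(q)$ and let $G=\{M_{a,b,c,d}: a\in{\rm GF}(q)\setminus\{0\},\ b,c,d\in{\rm GF}(q),\ c^2+cd+\alpha d^2=1\}$, where $$M_{a,b,c,d}=\begin{pmatrix}1&0&0&0&0\\0&ac&\alpha ad&bc&\alpha bd\\0&ad&a(c+d)&bd&b(c+d)\\0&0&0&a^{-1}c&\alpha a^{-1}d\\0&0&0&a^{-1}d&a^{-1}(c+d)\end{pmatrix},$$ acting on points (column vectors) by left multiplication. Then $G$ acts transitively on $\mathcal T$. *)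

theory Defs
  imports "HOL-Analysis.Analysis" "HOL-Computational_Algebra.Polynomial" "HOL-Library.Numeral_Type"
begin

text \<open>Homogeneous coordinates (X1,...,X5) of PG(4,q) are vectors of type 'a^5,
  coordinate X_k being x$k (k = 1..5 as elements of the index type 5).\<close>

definition ix :: "5 \<Rightarrow> nat" where
  "ix i = (if i = 1 then 0 else if i = 2 then 1 else if i = 3 then 2 else if i = 4 then 3 else 4)"

definition mat_of_rows :: "'a list list \<Rightarrow> 'a ^ 5 ^ 5" where
  "mat_of_rows rs = (\<chi> i j. rs ! ix i ! ix j)"

definition Mabcd :: "'a::field \<Rightarrow> 'a \<Rightarrow> 'a \<Rightarrow> 'a \<Rightarrow> 'a \<Rightarrow> 'a ^ 5 ^ 5" where
  "Mabcd \<alpha> a b c d = mat_of_rows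
     [[1, 0, 0, 0, 0],
      [0, a*c, \<alpha>*a*d, b*c, \<alpha>*b*d],
      [0, a*d, a*(c+d), b*d, b*(c+d)],
      [0, 0, 0, inverse a * c, \<alpha> * inverse a * d],
      [0, 0, 0, inverse a * d, inverse a * (c+d)]]"

definition Ggrp :: "'a::field \<Rightarrow> ('a ^ 5 ^ 5) set" where
  "Ggrp \<alpha> = {Mabcd \<alpha> a b c d | a b c d. a \<noteq> 0 \<and> c^2 + c*d + \<alpha>*d^2 = 1}"

text \<open>Lines of PG(4,q) are represented by the 2-dimensional subspaces of 'a^5.\<close>
definition span2 :: "'a::field ^ 5 \<Rightarrow> 'a ^ 5 \<Rightarrow> ('a ^ 5) set" where
  "span2 u v = {(\<chi> i. s * u$i + t * v$i) | s t. True}"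

definition indep2 :: "'a::field ^ 5 \<Rightarrow> 'a ^ 5 \<Rightarrow> bool" where
  "indep2 u v \<longleftrightarrow> (\<forall>s t. (\<forall>i. s * u$i + t * v$i = 0) \<longrightarrow> s = 0 \<and> t = 0)"

definition is_pline :: "('a::field ^ 5) set \<Rightarrow> bool" where
  "is_pline L \<longleftrightarrow> (\<exists>u v. indep2 u v \<and> L = span2 u v)"

definition in_Sigma :: "'a::field ^ 5 \<Rightarrow> bool" where
  "in_Sigma x \<longleftrightarrow> x$1 = 0"

definition in_ell :: "'a::field ^ 5 \<Rightarrow> bool" where
  "in_ell x \<longleftrightarrow> x$1 = 0 \<and> x$4 = 0 \<and> x$5 = 0"

definition in_H :: "'a::field ^ 5 \<Rightarrow> bool" where
  "in_H x \<longleftrightarrow> x$1 = 0 \<and> x$2 * x$5 + x$3 * x$4 = 0"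

definition Bform :: "'a::field ^ 5 \<Rightarrow> 'a ^ 5 \<Rightarrow> 'a" where
  "Bform x y = x$2 * y$5 + x$5 * y$2 + x$3 * y$4 + x$4 * y$3"

definition W_line :: "('a::field ^ 5) set \<Rightarrow> bool" where
  "W_line L \<longleftrightarrow> is_pline L \<and> (\<forall>x\<in>L. in_Sigma x) \<and> (\<forall>x\<in>L. \<forall>y\<in>L. Bform x y = 0)"

definition one_pt_H_minus_ell :: "('a::field ^ 5) set \<Rightarrow> bool" where
  "one_pt_H_minus_ell L \<longleftrightarrow>
     (\<exists>x\<in>L. x \<noteq> 0 \<and> in_H x \<and> \<not> in_ell x \<and>
        (\<forall>y\<in>L. y \<noteq> 0 \<and> in_H y \<and> \<not> in_ell y \<longrightarrow> (\<exists>k. y = k *s x)))"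

definition Tset :: "('a::field ^ 5) set set" where
  "Tset = {L. W_line L \<and> one_pt_H_minus_ell L}"

definition act :: "'a::field ^ 5 ^ 5 \<Rightarrow> ('a ^ 5) set \<Rightarrow> ('a ^ 5) set" where
  "act M L = (\<lambda>x. M *v x) ` L"

end

theory Submission
  imports Defs "HOL-Number_Theory.Residues"
begin

(* In characteristic 2 every M_{a,b,c,d} fixes Sigma and ell and multiplies both the quadratic
   form X2 X5 + X3 X4 of H and the form B by c^2 + cd + alpha d^2 = 1, the determinant of the block
   [[c, alpha d], [d, c + d]]; as it is invertible, it maps lines of T to lines of T.
   For transitivity, a line of T meets H - ell in a point P = (0, kx, ky, x, y). As X^2 + X + alpha
   is irreducible, x^2 + xy + alpha y^2 is nonzero, and as squaring is bijective on GF(2^h) it is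
   some r^2; then M_{1/r, k r, x/r, y/r} maps e4 = (0,0,0,1,0) to P. The lines of T through e4 are
   the lines <e4, (0,1,0,0,k)> with k nonzero, and M_{a,0,1,0} maps <e4, (0,1,0,0,1)> to the one
   with k = a^-2. So every line of T lies in the orbit of <e4, (0,1,0,0,1)>. *)

lemma CHAR_eq_2_if_card_eq_power_of_2:
  assumes "CARD('a::field) = 2 ^ h"
  shows "CHAR('a) = 2"
proof -
  have "finite (UNIV :: 'a set)"
    using assms card.infinite by fastforce
  then have "prime CHAR('a)"
    by (intro prime_CHAR_semidom finite_imp_CHAR_pos)
  moreover have "CHAR('a) dvd 2 ^ h"
    using CHAR_dvd_CARD[where 'a = 'a] assms by simp
  ultimately show ?thesis
    by (metis prime_dvd_power primes_dvd_imp_eq two_is_prime_nat)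
qed

lemma surj_square_if_CHAR_2:
  assumes "CHAR('a::field) = 2" and "finite (UNIV :: 'a set)"
  shows "surj (\<lambda>x::'a. x ^ 2)"
proof -
  have two: "(2::'a) = 0"
    using of_nat_CHAR[where 'a = 'a] assms(1) by simp
  have "inj (\<lambda>x::'a. x ^ 2)"
  proof
    fix x y :: 'a
    assume "x ^ 2 = y ^ 2"
    then have "(x + y) ^ 2 = 0"
      by (simp add: power2_sum two mult_2[symmetric] del: mult_2)
    then have "x = - y"
      by (simp add: eq_neg_iff_add_eq_0)
    then show "x = y"
      by (simp add: uminus_CHAR_2[OF assms(1)])
  qed
  then show ?thesis
    using finite_UNIV_inj_surj assms(2) by blast
qed

lemma irreducible_poly_no_root:
  fixes p :: "'a::field poly"
  assumes "irreducible p" and "degree p \<noteq> 1"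
  shows "poly p x \<noteq> 0"
proof
  assume "poly p x = 0"
  then obtain q where p: "p = [:- x, 1:] * q"
    by (auto simp: poly_eq_0_iff_dvd elim: dvdE)
  with assms(1) have "q \<noteq> 0"
    by auto
  have "\<not> is_unit [:- x, 1:]"
    by (simp add: is_unit_pCons_iff)
  then have "degree q = 0"
    using irreducibleD[OF assms(1) p] \<open>q \<noteq> 0\<close> by (simp add: is_unit_iff_degree)
  moreover have "degree p = 1 + degree q"
    unfolding p using \<open>q \<noteq> 0\<close> by (subst degree_mult_eq) auto
  ultimately show False
    using assms(2) by simp
qed

lemma norm_form_nonzero:
  fixes \<alpha> x y :: "'a::field"
  assumes "irreducible [:\<alpha>, 1, 1:]" and "x \<noteq> 0 \<or> y \<noteq> 0"
  shows "x ^ 2 + x * y + \<alpha> * y ^ 2 \<noteq> 0"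
proof (cases "y = 0")
  case False
  have "x ^ 2 + x * y + \<alpha> * y ^ 2 = y ^ 2 * poly [:\<alpha>, 1, 1:] (x / y)"
    using False by (simp add: field_simps power2_eq_square)
  moreover have "poly [:\<alpha>, 1, 1:] (x / y) \<noteq> 0"
    by (rule irreducible_poly_no_root[OF assms(1)]) simp
  ultimately show ?thesis
    using False by simp
qed (use assms(2) in simp)

lemma norm_form_CHAR_2:
  assumes "CHAR('a::comm_ring_1) = 2"
  shows "c ^ 2 + c * d + \<alpha> * d ^ 2 = c * (c + d) - \<alpha> * (d::'a) ^ 2"
  by (simp add: minus_CHAR_2[OF assms] algebra_simps power2_eq_square)

(* For a root w of X^2 + X + alpha, c^2 + cd + alpha d^2 is the norm of c + d w, and the (c, d)
   below are the coordinates of (c1 + d1 w) (c2 + d2 w); compare Mabcd_mult. *)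
lemma norm_form_mult_CHAR_2:
  fixes c1 d1 c2 d2 \<alpha> :: "'a::comm_ring_1"
  assumes "CHAR('a) = 2"
  defines "c \<equiv> c1 * c2 + \<alpha> * d1 * d2" and "d \<equiv> c1 * d2 + d1 * c2 + d1 * d2"
  shows "c ^ 2 + c * d + \<alpha> * d ^ 2 = (c1 ^ 2 + c1 * d1 + \<alpha> * d1 ^ 2) * (c2 ^ 2 + c2 * d2 + \<alpha> * d2 ^ 2)"
  unfolding norm_form_CHAR_2[OF assms(1)] c_def d_def by (simp add: algebra_simps power2_eq_square)

lemma exhaust_5:
  fixes i :: 5
  shows "i = 1 \<or> i = 2 \<or> i = 3 \<or> i = 4 \<or> i = 5"
proof (induct i)
  case (of_int z)
  then have "z = 0 \<or> z = 1 \<or> z = 2 \<or> z = 3 \<or> z = 4"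
    by fastforce
  then show ?case
    by auto
qed

lemma forall_5: "(\<forall>i::5. P i) \<longleftrightarrow> P 1 \<and> P 2 \<and> P 3 \<and> P 4 \<and> P 5"
  by (metis exhaust_5)

lemma sum_5: "sum f (UNIV::5 set) = f 1 + f 2 + f 3 + f 4 + f 5"
proof -
  have UNIV_5: "(UNIV::5 set) = {1, 2, 3, 4, 5}"
    using exhaust_5 by auto
  show ?thesis
    unfolding UNIV_5 by (simp add: ac_simps)
qed

lemma ix_simps [simp]: "ix 1 = 0" "ix 2 = 1" "ix 3 = 2" "ix 4 = 3" "ix 5 = 4"
  by (simp_all add: ix_def)

definition vec5 :: "'a \<Rightarrow> 'a \<Rightarrow> 'a \<Rightarrow> 'a \<Rightarrow> 'a \<Rightarrow> 'a ^ 5" where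
  "vec5 x1 x2 x3 x4 x5 = (\<chi> i. [x1, x2, x3, x4, x5] ! ix i)"

lemma vec5_nth [simp]:
  "vec5 x1 x2 x3 x4 x5 $ 1 = x1" "vec5 x1 x2 x3 x4 x5 $ 2 = x2" "vec5 x1 x2 x3 x4 x5 $ 3 = x3"
  "vec5 x1 x2 x3 x4 x5 $ 4 = x4" "vec5 x1 x2 x3 x4 x5 $ 5 = x5"
  by (simp_all add: vec5_def)

lemma vec5_eq_iff: "(x::'a ^ 5) = y \<longleftrightarrow> x$1 = y$1 \<and> x$2 = y$2 \<and> x$3 = y$3 \<and> x$4 = y$4 \<and> x$5 = y$5"
  by (simp add: vec_eq_iff forall_5)

lemma Mabcd_mult_vec:
  "Mabcd \<alpha> a b c d *v x = vec5 (x$1)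
     (a*c*x$2 + \<alpha>*a*d*x$3 + b*c*x$4 + \<alpha>*b*d*x$5)
     (a*d*x$2 + a*(c+d)*x$3 + b*d*x$4 + b*(c+d)*x$5)
     (inverse a*c*x$4 + \<alpha>*inverse a*d*x$5)
     (inverse a*d*x$4 + inverse a*(c+d)*x$5)"
  by (simp add: vec5_eq_iff Mabcd_def mat_of_rows_def matrix_vector_mult_def sum_5)

lemma Mabcd_mult:
  "Mabcd \<alpha> a1 b1 c1 d1 ** Mabcd \<alpha> a2 b2 c2 d2 =
   Mabcd \<alpha> (a1*a2) (a1*b2 + b1*inverse a2) (c1*c2 + \<alpha>*d1*d2) (c1*d2 + d1*c2 + d1*d2)"
  unfolding matrix_eq
  by (simp add: matrix_vector_mul_assoc[symmetric] Mabcd_mult_vec vec5_eq_iff algebra_simps)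

lemma Mabcd_1_0_1_0: "Mabcd \<alpha> 1 0 1 0 = mat 1"
  unfolding matrix_eq by (simp add: Mabcd_mult_vec vec5_eq_iff)

lemma Ggrp_iff:
  "M \<in> Ggrp \<alpha> \<longleftrightarrow> (\<exists>a b c d. M = Mabcd \<alpha> a b c d \<and> a \<noteq> 0 \<and> c^2 + c*d + \<alpha>*d^2 = 1)"
  unfolding Ggrp_def by blast

lemma Mabcd_in_Ggrp: "a \<noteq> 0 \<Longrightarrow> c^2 + c*d + \<alpha>*d^2 = 1 \<Longrightarrow> Mabcd \<alpha> a b c d \<in> Ggrp \<alpha>"
  unfolding Ggrp_def by blast

lemma Ggrp_mult_closed:
  fixes \<alpha> :: "'a::field"
  assumes "CHAR('a) = 2" and "A \<in> Ggrp \<alpha>" and "B \<in> Ggrp \<alpha>"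
  shows "A ** B \<in> Ggrp \<alpha>"
proof -
  obtain a1 b1 c1 d1 where A: "A = Mabcd \<alpha> a1 b1 c1 d1"
    and "a1 \<noteq> 0" and "c1^2 + c1*d1 + \<alpha>*d1^2 = 1"
    using assms(2) unfolding Ggrp_iff by blast
  moreover obtain a2 b2 c2 d2 where B: "B = Mabcd \<alpha> a2 b2 c2 d2"
    and "a2 \<noteq> 0" and "c2^2 + c2*d2 + \<alpha>*d2^2 = 1"
    using assms(3) unfolding Ggrp_iff by blast
  ultimately show ?thesis
    unfolding A B Mabcd_mult by (intro Mabcd_in_Ggrp) (simp_all add: norm_form_mult_CHAR_2[OF assms(1)])
qed

lemma Ggrp_inverse:
  fixes \<alpha> :: "'a::field"
  assumes "CHAR('a) = 2" and "M \<in> Ggrp \<alpha>"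
  shows "\<exists>M'\<in>Ggrp \<alpha>. M' ** M = mat 1 \<and> M ** M' = mat 1"
proof -
  obtain a b c d where M: "M = Mabcd \<alpha> a b c d" and "a \<noteq> 0" and N: "c^2 + c*d + \<alpha>*d^2 = 1"
    using assms(2) unfolding Ggrp_iff by blast
  have N': "c * (c + d) - \<alpha> * d^2 = 1"
    using N norm_form_CHAR_2[OF assms(1)] by metis
  define M' where "M' = Mabcd \<alpha> (inverse a) (- b) (c + d) (- d)"
  have "M' \<in> Ggrp \<alpha>"
    unfolding M'_def using \<open>a \<noteq> 0\<close> N
    by (intro Mabcd_in_Ggrp) (simp_all add: algebra_simps power2_eq_square)
  moreover have "M' ** M = Mabcd \<alpha> 1 0 1 0" "M ** M' = Mabcd \<alpha> 1 0 1 0"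
    unfolding M M'_def Mabcd_mult using \<open>a \<noteq> 0\<close> N'
    by (simp_all add: algebra_simps power2_eq_square)
  ultimately show ?thesis
    unfolding Mabcd_1_0_1_0 by blast
qed

lemma Mabcd_quadratic_form:
  fixes \<alpha> a b c d :: "'a::field" and x :: "'a ^ 5"
  assumes "a \<noteq> 0"
  defines "y \<equiv> Mabcd \<alpha> a b c d *v x"
  shows "y$2 * y$5 - y$3 * y$4 = (c * (c + d) - \<alpha> * d^2) * (x$2 * x$5 - x$3 * x$4)"
  using assms(1) unfolding y_def Mabcd_mult_vec vec5_nth by (simp add: field_simps power2_eq_square)

lemma Mabcd_bilinear_form:
  fixes \<alpha> a b c d :: "'a::field" and x y :: "'a ^ 5"
  assumes "a \<noteq> 0"
  defines "Mx \<equiv> Mabcd \<alpha> a b c d *v x" and "My \<equiv> Mabcd \<alpha> a b c d *v y"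
  shows "Mx$2 * My$5 + Mx$5 * My$2 - Mx$3 * My$4 - Mx$4 * My$3
       = (c * (c + d) - \<alpha> * d^2) * (x$2 * y$5 + x$5 * y$2 - x$3 * y$4 - x$4 * y$3)"
  using assms(1) unfolding Mx_def My_def Mabcd_mult_vec vec5_nth
  by (simp add: field_simps power2_eq_square)

lemma Mabcd_preserves_ell: "in_ell x \<Longrightarrow> in_ell (Mabcd \<alpha> a b c d *v x)"
  by (simp add: Mabcd_mult_vec in_ell_def)

lemma Ggrp_invariants:
  fixes \<alpha> :: "'a::field"
  assumes char: "CHAR('a) = 2" and "M \<in> Ggrp \<alpha>"
  shows "in_Sigma (M *v x) \<longleftrightarrow> in_Sigma x" and "in_H (M *v x) \<longleftrightarrow> in_H x"
    and "in_ell (M *v x) \<longleftrightarrow> in_ell x" and "Bform (M *v x) (M *v y) = Bform x y"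
proof -
  obtain a b c d where M: "M = Mabcd \<alpha> a b c d" and a: "a \<noteq> 0" and N: "c^2 + c*d + \<alpha>*d^2 = 1"
    using assms(2) unfolding Ggrp_iff by blast
  have N': "c * (c + d) - \<alpha> * d^2 = 1"
    using N norm_form_CHAR_2[OF char] by metis
  show "in_Sigma (M *v x) \<longleftrightarrow> in_Sigma x"
    by (simp add: M Mabcd_mult_vec in_Sigma_def)
  show "in_H (M *v x) \<longleftrightarrow> in_H x"
    using Mabcd_quadratic_form[OF a, of \<alpha> b c d x] N'
    by (simp add: in_H_def M Mabcd_mult_vec minus_CHAR_2[OF char])
  show "Bform (M *v x) (M *v y) = Bform x y"
    using Mabcd_bilinear_form[OF a, of \<alpha> b c d x y] N'
    by (simp add: Bform_def M minus_CHAR_2[OF char])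
  obtain M' where "M' \<in> Ggrp \<alpha>" and "M' ** M = mat 1"
    using Ggrp_inverse[OF char assms(2)] by blast
  then have "M' *v (M *v x) = x"
    by (simp add: matrix_vector_mul_assoc)
  then show "in_ell (M *v x) \<longleftrightarrow> in_ell x"
    using Mabcd_preserves_ell \<open>M' \<in> Ggrp \<alpha>\<close> M by (metis Ggrp_iff)
qed

lemma span2_eq: "span2 u v = {s *s u + t *s v | s t. True}"
proof -
  have "(\<chi> i. s * u$i + t * v$i) = s *s u + t *s v" for s t
    by (simp add: vec_eq_iff)
  then show ?thesis
    unfolding span2_def by simp
qed

lemma indep2_iff: "indep2 u v \<longleftrightarrow> (\<forall>s t. s *s u + t *s v = 0 \<longrightarrow> s = 0 \<and> t = 0)"
  by (simp add: indep2_def vec_eq_iff)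

lemma indep2_nonzero: "indep2 u v \<Longrightarrow> v \<noteq> 0"
  unfolding indep2_iff by (metis vector_smult_lid vector_smult_lzero add_0 zero_neq_one)

lemma span2_combI: "s *s u + t *s v \<in> span2 u v"
  by (auto simp: span2_eq)

lemma span2_left: "u \<in> span2 u v"
  using span2_combI[of 1 u 0 v] by simp

lemma span2_right: "v \<in> span2 u v"
  using span2_combI[of 0 u 1 v] by simp

lemma span2_subset:
  assumes "u' \<in> span2 u v" and "v' \<in> span2 u v"
  shows "span2 u' v' \<subseteq> span2 u v"
proof
  fix x assume "x \<in> span2 u' v'"
  then obtain s t where x: "x = s *s u' + t *s v'"
    by (auto simp: span2_eq)
  obtain s1 t1 s2 t2 where "u' = s1 *s u + t1 *s v" and "v' = s2 *s u + t2 *s v"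
    using assms by (auto simp: span2_eq)
  then have "x = (s * s1 + t * s2) *s u + (s * t1 + t * t2) *s v"
    unfolding x by (simp add: vec_eq_iff algebra_simps)
  then show "x \<in> span2 u v"
    using span2_combI by metis
qed

lemma span2_eqI:
  "u' \<in> span2 u v \<Longrightarrow> v' \<in> span2 u v \<Longrightarrow> u \<in> span2 u' v' \<Longrightarrow> v \<in> span2 u' v'
    \<Longrightarrow> span2 u v = span2 u' v'"
  using span2_subset by blast

lemma span2_scale:
  fixes s t :: "'a::field"
  assumes "s \<noteq> 0" and "t \<noteq> 0"
  shows "span2 (s *s u) (t *s v) = span2 u v"
proof (rule span2_eqI)
  show "u \<in> span2 (s *s u) (t *s v)"
    using span2_combI[of "inverse s" "s *s u" 0 "t *s v"] assms by (simp add: vector_smult_assoc)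
  show "v \<in> span2 (s *s u) (t *s v)"
    using span2_combI[of 0 "s *s u" "inverse t" "t *s v"] assms by (simp add: vector_smult_assoc)
qed (use span2_combI[of s u 0 v] span2_combI[of 0 u t v] in simp_all)

lemma span2_commute: "span2 u v = span2 v u"
  by (intro span2_eqI span2_left span2_right)

lemma indep2_commute: "indep2 u v \<longleftrightarrow> indep2 v u"
  unfolding indep2_iff by (metis add.commute)

lemma span2_exchange:
  fixes s :: "'a::field"
  assumes "indep2 u v" and "s \<noteq> 0"
  shows "indep2 (s *s u + t *s v) v" and "span2 (s *s u + t *s v) v = span2 u v"
proof -
  show "indep2 (s *s u + t *s v) v"
    unfolding indep2_iff
  proof (intro allI impI)
    fix s' t' assume "s' *s (s *s u + t *s v) + t' *s v = 0"
    then have "(s' * s) *s u + (s' * t + t') *s v = 0"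
      by (simp add: vec_eq_iff algebra_simps)
    then show "s' = 0 \<and> t' = 0"
      using assms unfolding indep2_iff by fastforce
  qed
  have "u = inverse s *s (s *s u + t *s v) + (- t / s) *s v"
    using assms(2) by (simp add: vec_eq_iff field_simps)
  then show "span2 (s *s u + t *s v) v = span2 u v"
    by (intro span2_eqI[symmetric]) (metis span2_combI vector_smult_lid vector_smult_lzero add_0 add.right_neutral)+
qed

lemma span2_rebase:
  assumes "indep2 u v" and "w \<in> span2 u v" and "w \<noteq> 0"
  shows "\<exists>z. indep2 w z \<and> span2 u v = span2 w z"
proof -
  obtain s t where w: "w = s *s u + t *s v"
    using assms(2) by (auto simp: span2_eq)
  show ?thesis
  proof (cases "s = 0")
    case False
    then show ?thesis
      using span2_exchange[OF assms(1)] w by metis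
  next
    case True
    then have "t \<noteq> 0" and "w = t *s v + s *s u"
      using w assms(3) by auto
    then show ?thesis
      using span2_exchange assms(1) by (metis indep2_commute span2_commute)
  qed
qed

lemma indep2_mult_vec:
  assumes "inj ((*v) M)" and "indep2 u v"
  shows "indep2 (M *v u) (M *v v)"
  unfolding indep2_iff
proof (intro allI impI)
  fix s t assume "s *s (M *v u) + t *s (M *v v) = 0"
  then have "M *v (s *s u + t *s v) = M *v 0"
    by (simp add: vec.add vec.scale)
  then have "s *s u + t *s v = 0"
    by (rule injD[OF assms(1)])
  then show "s = 0 \<and> t = 0"
    using assms(2) unfolding indep2_iff by blast
qed

lemma act_mult: "act (A ** B) L = act A (act B L)"
  by (simp add: act_def image_image matrix_vector_mul_assoc)

lemma act_mat_1: "act (mat 1) L = L"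
  by (simp add: act_def)

lemma act_span2: "act M (span2 u v) = span2 (M *v u) (M *v v)"
proof -
  have "act M (span2 u v) = {M *v (s *s u + t *s v) | s t. True}"
    unfolding act_def span2_eq by blast
  then show ?thesis
    unfolding span2_eq by (simp add: vec.add vec.scale)
qed

lemma is_pline_act:
  assumes "inj ((*v) M)" and "is_pline L"
  shows "is_pline (act M L)"
  using assms indep2_mult_vec act_span2 unfolding is_pline_def by metis

lemma act_Tset:
  fixes M :: "'a::field ^ 5 ^ 5"
  assumes inj: "inj ((*v) M)"
    and Sigma: "\<And>x. in_Sigma (M *v x) \<longleftrightarrow> in_Sigma x"
    and H: "\<And>x. in_H (M *v x) \<longleftrightarrow> in_H x"
    and ell: "\<And>x. in_ell (M *v x) \<longleftrightarrow> in_ell x"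
    and B: "\<And>x y. Bform (M *v x) (M *v y) = Bform x y"
    and L: "L \<in> Tset"
  shows "act M L \<in> Tset"
proof -
  have "W_line (act M L)"
    using L is_pline_act[OF inj] Sigma B unfolding Tset_def W_line_def act_def by auto
  moreover obtain P where P: "P \<in> L" "P \<noteq> 0" "in_H P" "\<not> in_ell P"
    and unique: "\<And>y. y \<in> L \<Longrightarrow> y \<noteq> 0 \<Longrightarrow> in_H y \<Longrightarrow> \<not> in_ell y \<Longrightarrow> \<exists>k. y = k *s P"
    using L unfolding Tset_def one_pt_H_minus_ell_def by blast
  have M_eq_0: "M *v x = 0 \<longleftrightarrow> x = 0" for x
    using inj by (metis injD matrix_vector_mult_0_right)
  have "one_pt_H_minus_ell (act M L)"
    unfolding one_pt_H_minus_ell_def act_def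
  proof (intro bexI conjI ballI impI)
    show "M *v P \<noteq> 0" "in_H (M *v P)" "\<not> in_ell (M *v P)"
      using P H ell M_eq_0 by auto
    fix y assume "y \<in> (*v) M ` L" and "y \<noteq> 0 \<and> in_H y \<and> \<not> in_ell y"
    then obtain x where "x \<in> L" "y = M *v x" "x \<noteq> 0" "in_H x" "\<not> in_ell x"
      using H ell M_eq_0 by auto
    then show "\<exists>k. y = k *s (M *v P)"
      using unique by (metis vec.scale)
  qed (use P in auto)
  ultimately show ?thesis
    unfolding Tset_def by blast
qed

lemma Ggrp_act_Tset:
  fixes \<alpha> :: "'a::field"
  assumes "CHAR('a) = 2" and "M \<in> Ggrp \<alpha>" and "L \<in> Tset"
  shows "act M L \<in> Tset"
proof (rule act_Tset)
  show "inj ((*v) M)"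
    using Ggrp_inverse[OF assms(1,2)] matrix_left_invertible_injective by blast
qed (use Ggrp_invariants[OF assms(1,2)] assms(3) in auto)

lemma proportional_if_cross_products_eq:
  fixes a b c d :: "'a::field"
  assumes "a * d = b * c" and "c \<noteq> 0 \<or> d \<noteq> 0"
  shows "\<exists>k. a = k * c \<and> b = k * d"
proof (cases "c = 0")
  case True
  with assms show ?thesis
    by (intro exI[of _ "b / d"]) simp
next
  case False
  with assms(1) show ?thesis
    by (intro exI[of _ "a / c"]) (simp add: field_simps)
qed

lemma H_minus_ell_in_Ggrp_orbit:
  fixes \<alpha> :: "'a::field"
  assumes char: "CHAR('a) = 2" and sq: "surj (\<lambda>x::'a. x ^ 2)"
    and irr: "irreducible [:\<alpha>, 1, 1:]" and "in_H P" and "\<not> in_ell P"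
  shows "\<exists>M\<in>Ggrp \<alpha>. M *v vec5 0 0 0 1 0 = P"
proof -
  have P1: "P$1 = 0" and P45: "P$4 \<noteq> 0 \<or> P$5 \<noteq> 0"
    using assms(4,5) unfolding in_H_def in_ell_def by auto
  obtain r where r: "r ^ 2 = P$4 ^ 2 + P$4 * P$5 + \<alpha> * P$5 ^ 2"
    using sq by (metis surjD)
  have "r \<noteq> 0"
    using r norm_form_nonzero[OF irr P45] by auto
  define c where "c = P$4 / r"
  define d where "d = P$5 / r"
  have "c^2 + c*d + \<alpha>*d^2 = (P$4 ^ 2 + P$4 * P$5 + \<alpha> * P$5 ^ 2) / r ^ 2"
    using \<open>r \<noteq> 0\<close> unfolding c_def d_def by (simp add: field_simps power2_eq_square)
  then have N: "c^2 + c*d + \<alpha>*d^2 = 1"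
    using \<open>r \<noteq> 0\<close> by (simp flip: r)
  have "P$2 * P$5 = P$3 * P$4"
    using assms(4) uminus_CHAR_2[OF char] unfolding in_H_def by (metis add_eq_0_iff)
  then obtain \<kappa> where \<kappa>: "P$2 = \<kappa> * P$4" "P$3 = \<kappa> * P$5"
    using proportional_if_cross_products_eq P45 by blast
  have "Mabcd \<alpha> (inverse r) (\<kappa> * r) c d \<in> Ggrp \<alpha>"
    using \<open>r \<noteq> 0\<close> N by (intro Mabcd_in_Ggrp) simp_all
  moreover have "Mabcd \<alpha> (inverse r) (\<kappa> * r) c d *v vec5 0 0 0 1 0 = P"
    using \<open>r \<noteq> 0\<close> P1 \<kappa> unfolding Mabcd_mult_vec vec5_eq_iff c_def d_def by simp
  ultimately show ?thesis
    by blast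
qed

lemma Tset_line_through_e4:
  assumes L: "L \<in> Tset" and e4: "vec5 0 0 0 1 0 \<in> L"
  shows "\<exists>k. k \<noteq> 0 \<and> L = span2 (vec5 0 0 0 1 0) (vec5 0 1 0 0 k)"
proof -
  let ?e4 = "vec5 0 0 0 1 0 :: 'a ^ 5"
  have W: "W_line L" and one: "one_pt_H_minus_ell L"
    using L unfolding Tset_def by auto
  have e4_point: "?e4 \<noteq> 0" "in_H ?e4" "\<not> in_ell ?e4"
    by (simp_all add: vec5_eq_iff in_H_def in_ell_def)
  have multiple_of_e4: "\<exists>k. w = k *s ?e4" if w: "w \<in> L" "w \<noteq> 0" "in_H w" "\<not> in_ell w" for w
  proof -
    obtain P where "\<forall>y\<in>L. y \<noteq> 0 \<and> in_H y \<and> \<not> in_ell y \<longrightarrow> (\<exists>k. y = k *s P)"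
      using one unfolding one_pt_H_minus_ell_def by blast
    then obtain k1 k2 where "w = k1 *s P" "?e4 = k2 *s P"
      using w e4 e4_point by blast
    then show ?thesis
      using e4_point(1) by (intro exI[of _ "k1 / k2"]) (auto simp: vec_eq_iff)
  qed
  obtain u v where "indep2 u v" and "L = span2 u v"
    using W unfolding W_line_def is_pline_def by blast
  then obtain z where z: "indep2 ?e4 z" "L = span2 ?e4 z"
    using span2_rebase e4 e4_point(1) by metis
  define R where "R = z + (- z$4) *s ?e4"
  have R: "indep2 ?e4 R" "L = span2 ?e4 R"
    using span2_exchange[of z ?e4 1 "- z$4"] z by (simp_all add: R_def indep2_commute span2_commute)
  have "in_Sigma R" "Bform ?e4 R = 0"
    using W span2_right[of R ?e4] e4 unfolding R(2) W_line_def by auto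
  then have R_eq: "R = vec5 0 (z$2) 0 0 (z$5)"
    by (simp add: R_def vec5_eq_iff in_Sigma_def Bform_def)
  (* Otherwise R, respectively e4 + R, would be a second point of H - ell on L. *)
  have "z$2 \<noteq> 0"
  proof
    assume "z$2 = 0"
    then have "R \<noteq> 0" "in_H R" "\<not> in_ell R"
      using indep2_nonzero[OF R(1)] by (auto simp: R_eq vec5_eq_iff in_H_def in_ell_def)
    then obtain k where "R = k *s ?e4"
      using multiple_of_e4 span2_right unfolding R(2) by blast
    then show False
      using \<open>R \<noteq> 0\<close> by (simp add: R_eq vec5_eq_iff)
  qed
  have "z$5 \<noteq> 0"
  proof
    assume "z$5 = 0"
    define w where "w = 1 *s ?e4 + 1 *s R"
    have "w \<in> L"
      unfolding w_def R(2) by (rule span2_combI)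
    moreover have "w \<noteq> 0" "in_H w" "\<not> in_ell w"
      using \<open>z$5 = 0\<close> by (auto simp: w_def R_eq vec5_eq_iff in_H_def in_ell_def)
    ultimately obtain k where "w = k *s ?e4"
      using multiple_of_e4 by blast
    then show False
      using \<open>z$2 \<noteq> 0\<close> by (simp add: w_def R_eq vec5_eq_iff)
  qed
  have "R = z$2 *s vec5 0 1 0 0 (z$5 / z$2)"
    using \<open>z$2 \<noteq> 0\<close> by (simp add: R_eq vec5_eq_iff)
  then have "L = span2 ?e4 (vec5 0 1 0 0 (z$5 / z$2))"
    using span2_scale[of 1 "z$2" ?e4] \<open>z$2 \<noteq> 0\<close> R(2) by simp
  moreover have "z$5 / z$2 \<noteq> 0"
    using \<open>z$2 \<noteq> 0\<close> \<open>z$5 \<noteq> 0\<close> by simp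
  ultimately show ?thesis
    by blast
qed

lemma Tset_in_Ggrp_orbit_of_base_line:
  fixes \<alpha> :: "'a::field"
  assumes char: "CHAR('a) = 2" and sq: "surj (\<lambda>x::'a. x ^ 2)"
    and irr: "irreducible [:\<alpha>, 1, 1:]" and L: "L \<in> Tset"
  shows "\<exists>M\<in>Ggrp \<alpha>. act M (span2 (vec5 0 0 0 1 0) (vec5 0 1 0 0 1)) = L"
proof -
  let ?e4 = "vec5 0 0 0 1 0 :: 'a ^ 5"
  obtain P where "P \<in> L" "in_H P" "\<not> in_ell P"
    using L unfolding Tset_def one_pt_H_minus_ell_def by blast
  then obtain A where A: "A \<in> Ggrp \<alpha>" "A *v ?e4 = P"
    using H_minus_ell_in_Ggrp_orbit[OF char sq irr] by blast
  obtain A' where A': "A' \<in> Ggrp \<alpha>" "A' ** A = mat 1" "A ** A' = mat 1"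
    using Ggrp_inverse[OF char A(1)] by blast
  have "act A' L \<in> Tset"
    by (rule Ggrp_act_Tset[OF char A'(1) L])
  moreover have "?e4 \<in> act A' L"
    using \<open>P \<in> L\<close> A(2) A'(2) unfolding act_def
    by (metis image_eqI matrix_vector_mul_assoc matrix_vector_mul_lid)
  ultimately obtain k where "k \<noteq> 0" and k: "act A' L = span2 ?e4 (vec5 0 1 0 0 k)"
    using Tset_line_through_e4 by blast
  obtain a where a: "a ^ 2 = inverse k"
    using sq by (metis surjD)
  then have "a \<noteq> 0"
    using \<open>k \<noteq> 0\<close> by auto
  define D where "D = Mabcd \<alpha> a 0 1 0"
  have "D \<in> Ggrp \<alpha>"
    unfolding D_def using \<open>a \<noteq> 0\<close> by (intro Mabcd_in_Ggrp) simp_all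
  have "k = inverse a ^ 2"
    using a by (simp add: power_inverse)
  then have "D *v ?e4 = inverse a *s ?e4" and "D *v vec5 0 1 0 0 1 = a *s vec5 0 1 0 0 k"
    using \<open>a \<noteq> 0\<close> by (simp_all add: D_def Mabcd_mult_vec vec5_eq_iff power2_eq_square)
  then have "act D (span2 ?e4 (vec5 0 1 0 0 1)) = span2 (inverse a *s ?e4) (a *s vec5 0 1 0 0 k)"
    by (simp add: act_span2)
  also have "\<dots> = act A' L"
    unfolding k using \<open>a \<noteq> 0\<close> by (simp add: span2_scale)
  finally have "act (A ** D) (span2 ?e4 (vec5 0 1 0 0 1)) = act (A ** A') L"
    by (simp add: act_mult)
  then show ?thesis
    using Ggrp_mult_closed[OF char A(1) \<open>D \<in> Ggrp \<alpha>\<close>] A'(3) act_mat_1 by metis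
qed

theorem lemma3p3:
  fixes \<alpha> :: "'a::field" and h :: nat
  assumes "CARD('a) = 2 ^ h"
    and "irreducible [:\<alpha>, 1, 1:]"
  shows "(\<forall>M\<in>Ggrp \<alpha>. \<forall>L\<in>(Tset :: ('a ^ 5) set set). act M L \<in> Tset)
       \<and> (\<forall>L1\<in>(Tset :: ('a ^ 5) set set). \<forall>L2\<in>Tset. \<exists>M\<in>Ggrp \<alpha>. act M L1 = L2)"
proof (intro conjI ballI)
  have char: "CHAR('a) = 2"
    using assms(1) by (rule CHAR_eq_2_if_card_eq_power_of_2)
  moreover have "finite (UNIV :: 'a set)"
    using assms(1) card.infinite by fastforce
  ultimately have sq: "surj (\<lambda>x::'a. x ^ 2)"
    by (rule surj_square_if_CHAR_2)
  show "act M L \<in> Tset" if "M \<in> Ggrp \<alpha>" and "L \<in> Tset" for M and L :: "('a ^ 5) set"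
    using Ggrp_act_Tset[OF char] that .
  fix L1 L2 :: "('a ^ 5) set"
  assume "L1 \<in> Tset" and "L2 \<in> Tset"
  then obtain M1 M2 where M1: "M1 \<in> Ggrp \<alpha>" "act M1 (span2 (vec5 0 0 0 1 0) (vec5 0 1 0 0 1)) = L1"
    and M2: "M2 \<in> Ggrp \<alpha>" "act M2 (span2 (vec5 0 0 0 1 0) (vec5 0 1 0 0 1)) = L2"
    using Tset_in_Ggrp_orbit_of_base_line[OF char sq assms(2)] by metis
  obtain M1' where "M1' \<in> Ggrp \<alpha>" and "M1' ** M1 = mat 1"
    using Ggrp_inverse[OF char M1(1)] by blast
  then have "act (M2 ** M1') L1 = L2"
    unfolding M1(2)[symmetric] M2(2)[symmetric] act_mult[symmetric]
    by (simp flip: matrix_mul_assoc)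
  then show "\<exists>M\<in>Ggrp \<alpha>. act M L1 = L2"
    using Ggrp_mult_closed[OF char M2(1) \<open>M1' \<in> Ggrp \<alpha>\<close>] by blast
qed

end
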